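(* Consider formal expressions built from two variables $\pi_i,\pi_j$ and real constants using only the binary operators $+,-,\times,\div$ (with parentheses allowed freely), and let the operator count of an expression be the number of occurrences of these operators in it. Each expression defines a function $f(\pi_i,\pi_j)$ wherever it is defined. Say that $f$ is admissible if: (1) $f$ is defined on all of $\mathbb{R}^+\times\mathbb{R}^+$ (where $\mathbb{R}^+=(0,\infty)$) and takes values in $[0,1]$; (2) $f(\pi_i,\pi_j)=\tfrac12$ whenever $\pi_i=\pi_j$; (3) $\lim_{\pi_i\to 0} f(\pi_i,\pi_j)=0$ for each fixed $\pi_j$; (4) $\lim_{\pi_j\to 0} f(\pi_i,\pi_j)=1$ for each fixed $\pi_i$; (5) $\lim_{\pi_i\to \infty} f(\pi_i,\pi_j)=1$ for each fixed $\pi_j$; (6) $\lim_{\pi_j\to \infty} f(\pi_i,\pi_j)=0$ for each fixed $\pi_i$. Then no expression with operator count $0$ or $1$ defines an admissible function, and every expression with operator count exactly $2$ that defines an admissible function defines $f(\pi_i,\pi_j)=\dfrac{\pi_i}{\pi_i+\pi_j}$ (which is admissible). Thus $\pi_i/(\pi_i+\pi_j)$ is the unique admissible function of minimal operator count.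
   Context: Here $\pi_i,\pi_j>0$ are strength parameters of items $i$ and $j$, and $f(\pi_i,\pi_j)$ is intended as the probability that $i$ is preferred to $j$ in a pairwise comparison. Constants may appear in place of variables at no cost in the operator count; parentheses do not count as operators. *)

theory Defs
  imports Complex_Main
begin

datatype expr = VarI | VarJ | Const real
  | Add expr expr | Sub expr expr | Mul expr expr | Div expr expr

fun ops :: "expr \<Rightarrow> nat" where
  "ops VarI = 0"
| "ops VarJ = 0"
| "ops (Const c) = 0"
| "ops (Add a b) = Suc (ops a + ops b)"
| "ops (Sub a b) = Suc (ops a + ops b)"
| "ops (Mul a b) = Suc (ops a + ops b)"
| "ops (Div a b) = Suc (ops a + ops b)"

fun eval :: "expr \<Rightarrow> real \<Rightarrow> real \<Rightarrow> real option" where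
  "eval VarI x y = Some x"
| "eval VarJ x y = Some y"
| "eval (Const c) x y = Some c"
| "eval (Add a b) x y = (case (eval a x y, eval b x y) of
      (Some u, Some v) \<Rightarrow> Some (u + v) | _ \<Rightarrow> None)"
| "eval (Sub a b) x y = (case (eval a x y, eval b x y) of
      (Some u, Some v) \<Rightarrow> Some (u - v) | _ \<Rightarrow> None)"
| "eval (Mul a b) x y = (case (eval a x y, eval b x y) of
      (Some u, Some v) \<Rightarrow> Some (u * v) | _ \<Rightarrow> None)"
| "eval (Div a b) x y = (case (eval a x y, eval b x y) of
      (Some u, Some v) \<Rightarrow> (if v = 0 then None else Some (u / v)) | _ \<Rightarrow> None)"

definition admissible :: "(real \<Rightarrow> real \<Rightarrow> real) \<Rightarrow> bool" where
  "admissible f \<longleftrightarrow>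
     (\<forall>x>0. \<forall>y>0. 0 \<le> f x y \<and> f x y \<le> 1) \<and>
     (\<forall>x>0. f x x = 1/2) \<and>
     (\<forall>y>0. ((\<lambda>x. f x y) \<longlongrightarrow> 0) (at_right 0)) \<and>
     (\<forall>x>0. ((\<lambda>y. f x y) \<longlongrightarrow> 1) (at_right 0)) \<and>
     (\<forall>y>0. ((\<lambda>x. f x y) \<longlongrightarrow> 1) at_top) \<and>
     (\<forall>x>0. ((\<lambda>y. f x y) \<longlongrightarrow> 0) at_top)"

definition admissible_expr :: "expr \<Rightarrow> bool" where
  "admissible_expr e \<longleftrightarrow>
     (\<forall>x>0. \<forall>y>0. eval e x y \<noteq> None) \<and> admissible (\<lambda>x y. the (eval e x y))"

end

theory Submission
  imports Defs "HOL-Real_Asymp.Real_Asymp"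
begin

(* An admissible function f equals 1/2 on the diagonal, takes values in [0, 1], and
   f(x, 1) < 1/4 for some 0 < x < 1 since f(x, 1) tends to 0 as x \<rightarrow> 0.
   These finitely many consequences already decide the question for expressions with at
   most two operators: such an expression has at most three leaves, and running through
   all shapes, the diagonal equations are linear in the constants and force the
   non-constant parts to cancel, while the bounds and the small value at (x, 1) rule out
   everything else.  Only x / (x + y) and x / (y + x) survive. *)

(* The diagonal is compared with eval e 1 1 rather than with 1/2 so that simp cancels
   the constant parts: c + 2 * d = c + d becomes d = 0, which keeps the enumeration
   below within linear arithmetic. *)
definition admissible_samples :: "expr \<Rightarrow> bool" where
  "admissible_samples e \<longleftrightarrow>
     eval e 1 1 = Some (1/2) \<and> eval e 2 2 = eval e 1 1 \<and>
     (\<exists>v. eval e 4 1 = Some v \<and> 0 \<le> v \<and> v \<le> 1) \<and>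
     (\<exists>v. eval e 1 4 = Some v \<and> 0 \<le> v \<and> v \<le> 1) \<and>
     (\<exists>x v. 0 < x \<and> x < 1 \<and> eval e x 1 = Some v \<and> v < 1/4)"

lemma admissible_expr_imp_samples:
  assumes "admissible_expr e"
  shows "admissible_samples e"
proof -
  define f where "f = (\<lambda>x y. the (eval e x y))"
  have eval_f: "eval e x y = Some (f x y)" if "x > 0" "y > 0" for x y
    using assms that by (auto simp: admissible_expr_def f_def)
  have adm: "admissible f"
    using assms by (simp add: admissible_expr_def f_def)
  then have diag: "f t t = 1/2" if "t > 0" for t
    using that by (simp add: admissible_def)
  have "((\<lambda>x. f x 1) \<longlongrightarrow> 0) (at_right 0)"
    using adm by (simp add: admissible_def)
  then have "\<forall>\<^sub>F x in at_right 0. f x 1 < 1/4"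
    by (rule order_tendstoD) simp
  moreover have "\<forall>\<^sub>F x in at_right (0::real). 0 < x \<and> x < 1"
    by (rule eventually_at_rightI[of 0 1]) auto
  ultimately obtain x where "0 < x" "x < 1" "f x 1 < 1/4"
    using eventually_happens'[OF trivial_limit_at_right_real] eventually_conj by blast
  with adm show ?thesis
    unfolding admissible_samples_def admissible_def by (auto simp: eval_f diag)
qed

lemma ops_0_cases:
  "ops e = 0 \<Longrightarrow> (e = VarI \<Longrightarrow> P) \<Longrightarrow> (e = VarJ \<Longrightarrow> P) \<Longrightarrow> (\<And>c. e = Const c \<Longrightarrow> P) \<Longrightarrow> P"
  by (cases e) auto

lemma ops_Suc_cases [consumes 1, case_names Add Sub Mul Div]:
  "ops e = Suc n \<Longrightarrow>
    (\<And>a b. ops a + ops b = n \<Longrightarrow> e = Add a b \<Longrightarrow> P) \<Longrightarrow>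
    (\<And>a b. ops a + ops b = n \<Longrightarrow> e = Sub a b \<Longrightarrow> P) \<Longrightarrow>
    (\<And>a b. ops a + ops b = n \<Longrightarrow> e = Mul a b \<Longrightarrow> P) \<Longrightarrow>
    (\<And>a b. ops a + ops b = n \<Longrightarrow> e = Div a b \<Longrightarrow> P) \<Longrightarrow> P"
  by (cases e) auto

lemma ops_1_cases:
  "ops e = Suc 0 \<Longrightarrow>
    (\<And>a b. ops a = 0 \<Longrightarrow> ops b = 0 \<Longrightarrow> e = Add a b \<Longrightarrow> P) \<Longrightarrow>
    (\<And>a b. ops a = 0 \<Longrightarrow> ops b = 0 \<Longrightarrow> e = Sub a b \<Longrightarrow> P) \<Longrightarrow>
    (\<And>a b. ops a = 0 \<Longrightarrow> ops b = 0 \<Longrightarrow> e = Mul a b \<Longrightarrow> P) \<Longrightarrow>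
    (\<And>a b. ops a = 0 \<Longrightarrow> ops b = 0 \<Longrightarrow> e = Div a b \<Longrightarrow> P) \<Longrightarrow> P"
  by (elim ops_Suc_cases) auto

lemma ops_sum_1_cases:
  "ops a + ops b = 1 \<Longrightarrow> (ops a = 0 \<Longrightarrow> ops b = Suc 0 \<Longrightarrow> P) \<Longrightarrow>
    (ops a = Suc 0 \<Longrightarrow> ops b = 0 \<Longrightarrow> P) \<Longrightarrow> P"
  by linarith

lemma ops_le_1_not_admissible_samples:
  assumes "ops e \<le> 1"
  shows "\<not> admissible_samples e"
proof
  assume samples: "admissible_samples e"
  consider "ops e = 0" | "ops e = Suc 0"
    using assms by linarith
  then show False
  proof cases
    case 1
    then show False
      using samples by (elim ops_0_cases) (auto simp: admissible_samples_def)
  next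
    case 2
    then show False
      using samples
      by (elim ops_1_cases; elim ops_0_cases;
          simp add: admissible_samples_def split: if_splits; (elim conjE exE disjE; linarith)?)
  qed
qed

lemma Add_ops_1_not_admissible_samples:
  assumes "ops a + ops b = 1"
  shows "\<not> admissible_samples (Add a b)"
  using assms
  by (elim ops_sum_1_cases ops_1_cases; elim ops_0_cases;
      simp add: admissible_samples_def split: if_splits; (elim conjE exE disjE; linarith)?)

lemma Sub_ops_1_not_admissible_samples:
  assumes "ops a + ops b = 1"
  shows "\<not> admissible_samples (Sub a b)"
  using assms
  by (elim ops_sum_1_cases ops_1_cases; elim ops_0_cases;
      simp add: admissible_samples_def split: if_splits; (elim conjE exE disjE; linarith)?)

lemma Mul_ops_1_not_admissible_samples:
  assumes "ops a + ops b = 1"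
  shows "\<not> admissible_samples (Mul a b)"
  using assms
  by (elim ops_sum_1_cases ops_1_cases; elim ops_0_cases;
      simp add: admissible_samples_def split: if_splits; (elim conjE exE disjE; linarith)?)

lemma Div_ops_1_admissible_samples:
  assumes "ops a + ops b = 1" and "admissible_samples (Div a b)"
  shows "a = VarI \<and> (b = Add VarI VarJ \<or> b = Add VarJ VarI)"
  using assms
  by (elim ops_sum_1_cases ops_1_cases; elim ops_0_cases;
      simp add: admissible_samples_def split: if_splits; (elim conjE exE disjE; linarith)?)

lemma admissible_samples_ops_le_2:
  assumes "ops e \<le> 2" and "admissible_samples e"
  shows "e = Div VarI (Add VarI VarJ) \<or> e = Div VarI (Add VarJ VarI)"
proof -
  have "\<not> ops e \<le> 1"
    using assms(2) ops_le_1_not_admissible_samples by blast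
  with assms(1) have "ops e = Suc 1"
    by linarith
  then show ?thesis
  proof (cases rule: ops_Suc_cases)
    case (Add a b)
    then show ?thesis using assms(2) Add_ops_1_not_admissible_samples by blast
  next
    case (Sub a b)
    then show ?thesis using assms(2) Sub_ops_1_not_admissible_samples by blast
  next
    case (Mul a b)
    then show ?thesis using assms(2) Mul_ops_1_not_admissible_samples by blast
  next
    case (Div a b)
    then show ?thesis using assms(2) Div_ops_1_admissible_samples by blast
  qed
qed

lemma admissible_cong:
  assumes "\<And>x y. x > 0 \<Longrightarrow> y > 0 \<Longrightarrow> f x y = g x y"
  shows "admissible f \<longleftrightarrow> admissible g"
proof -
  have pos: "\<forall>\<^sub>F t in at_right 0. (t::real) > 0" "\<forall>\<^sub>F t in at_top. (t::real) > 0"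
    by (simp_all add: eventually_at_right_less)
  have "((\<lambda>x. f x y) \<longlongrightarrow> l) F \<longleftrightarrow> ((\<lambda>x. g x y) \<longlongrightarrow> l) F"
    if "y > 0" "\<forall>\<^sub>F t in F. t > 0" for y l F
    using that by (intro tendsto_cong) (auto elim: eventually_mono simp: assms)
  moreover have "((\<lambda>y. f x y) \<longlongrightarrow> l) F \<longleftrightarrow> ((\<lambda>y. g x y) \<longlongrightarrow> l) F"
    if "x > 0" "\<forall>\<^sub>F t in F. t > 0" for x l F
    using that by (intro tendsto_cong) (auto elim: eventually_mono simp: assms)
  ultimately show ?thesis
    unfolding admissible_def using pos by (simp add: assms)
qed

lemma admissible_Bradley_Terry: "admissible (\<lambda>x y. x / (x + y))"
  unfolding admissible_def by (intro conjI allI impI; (simp; fail)?; real_asymp)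

lemma eval_Bradley_Terry:
  assumes "x > 0" "y > 0"
  shows "eval (Div VarI (Add VarI VarJ)) x y = Some (x / (x + y))"
    and "eval (Div VarI (Add VarJ VarI)) x y = Some (x / (x + y))"
  using assms by (simp_all add: add.commute)

lemma admissible_expr_Bradley_Terry: "admissible_expr (Div VarI (Add VarI VarJ))"
proof -
  have "admissible (\<lambda>x y. the (eval (Div VarI (Add VarI VarJ)) x y))"
    using admissible_Bradley_Terry by (subst admissible_cong) (simp_all add: eval_Bradley_Terry)
  then show ?thesis
    by (simp add: admissible_expr_def eval_Bradley_Terry)
qed

theorem mainTheorem1:
  shows "(\<forall>e. ops e \<le> 1 \<longrightarrow> \<not> admissible_expr e)
    \<and> (\<forall>e. ops e = 2 \<and> admissible_expr e \<longrightarrow>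
          (\<forall>x>0. \<forall>y>0. eval e x y = Some (x / (x + y))))
    \<and> admissible_expr (Div VarI (Add VarI VarJ))"
proof (intro conjI allI impI)
  fix e
  assume "ops e \<le> 1"
  then show "\<not> admissible_expr e"
    using ops_le_1_not_admissible_samples admissible_expr_imp_samples by blast
next
  fix e and x y :: real
  assume "ops e = 2 \<and> admissible_expr e" and "x > 0" "y > 0"
  then have "e = Div VarI (Add VarI VarJ) \<or> e = Div VarI (Add VarJ VarI)"
    by (simp add: admissible_samples_ops_le_2 admissible_expr_imp_samples)
  with \<open>x > 0\<close> \<open>y > 0\<close> show "eval e x y = Some (x / (x + y))"
    using eval_Bradley_Terry by blast
next
  show "admissible_expr (Div VarI (Add VarI VarJ))"
    by (rule admissible_expr_Bradley_Terry)
qed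

end
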